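(* A quadratic vector field $v=P\,\partial_x+Q\,\partial_y$ on $\mathbb{C}^2$ with four distinct non-degenerate singular points is Hamiltonian if and only if $\operatorname{tr}Dv(p)=0$ at every singular point $p$. Consequently, the space $\mathcal{H}_2$ of quadratic Hamiltonian vector fields has dimension $9$.
   Context: $v$ is Hamiltonian if $v=H_y\,\partial_x-H_x\,\partial_y$ for some polynomial $H$, equivalently (on $\mathbb{C}^2$) if $P_x+Q_y\equiv0$. $Dv$ is the Jacobian matrix of $(P,Q)$. A singular point $p$ is non-degenerate if $\det Dv(p)\ne0$. The space of quadratic vector fields has dimension 12. *)

theory Defs
  imports "HOL-Analysis.Analysis"
begin

text \<open>A quadratic vector field v = P d/dx + Q d/dy on C^2 is encoded by its 12 complex
  coefficients c (the space of quadratic vector fields, of dimension 12):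
  P(x,y) = c0 + c1 x + c2 y + c3 x^2 + c4 x y + c5 y^2,
  Q(x,y) = c6 + c7 x + c8 y + c9 x^2 + c10 x y + c11 y^2.\<close>

type_synonym qvf = "complex ^ 12"

definition qP :: "qvf \<Rightarrow> complex \<Rightarrow> complex \<Rightarrow> complex" where
  "qP c x y = c$0 + c$1 * x + c$2 * y + c$3 * x^2 + c$4 * x * y + c$5 * y^2"

definition qQ :: "qvf \<Rightarrow> complex \<Rightarrow> complex \<Rightarrow> complex" where
  "qQ c x y = c$6 + c$7 * x + c$8 * y + c$9 * x^2 + c$10 * x * y + c$11 * y^2"

definition pdx :: "(complex \<Rightarrow> complex \<Rightarrow> complex) \<Rightarrow> complex \<Rightarrow> complex \<Rightarrow> complex" where
  "pdx F x y = deriv (\<lambda>t. F t y) x"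

definition pdy :: "(complex \<Rightarrow> complex \<Rightarrow> complex) \<Rightarrow> complex \<Rightarrow> complex \<Rightarrow> complex" where
  "pdy F x y = deriv (\<lambda>t. F x t) y"

definition poly2 :: "(complex \<Rightarrow> complex \<Rightarrow> complex) \<Rightarrow> bool" where
  "poly2 H \<longleftrightarrow> (\<exists>n::nat. \<exists>a :: nat \<Rightarrow> nat \<Rightarrow> complex.
      \<forall>x y. H x y = (\<Sum>i\<le>n. \<Sum>j\<le>n. a i j * x^i * y^j))"

definition hamiltonian :: "qvf \<Rightarrow> bool" where
  "hamiltonian c \<longleftrightarrow> (\<exists>H. poly2 H \<and>
      (\<forall>x y. qP c x y = pdy H x y \<and> qQ c x y = - pdx H x y))"

definition singular_points :: "qvf \<Rightarrow> (complex \<times> complex) set" where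
  "singular_points c = {(x, y). qP c x y = 0 \<and> qQ c x y = 0}"

definition tr_Dv :: "qvf \<Rightarrow> complex \<times> complex \<Rightarrow> complex" where
  "tr_Dv c p = pdx (qP c) (fst p) (snd p) + pdy (qQ c) (fst p) (snd p)"

definition det_Dv :: "qvf \<Rightarrow> complex \<times> complex \<Rightarrow> complex" where
  "det_Dv c p = pdx (qP c) (fst p) (snd p) * pdy (qQ c) (fst p) (snd p)
              - pdy (qP c) (fst p) (snd p) * pdx (qQ c) (fst p) (snd p)"

definition nondegenerate :: "qvf \<Rightarrow> complex \<times> complex \<Rightarrow> bool" where
  "nondegenerate c p \<longleftrightarrow> det_Dv c p \<noteq> 0"

definition H2 :: "qvf set" where
  "H2 = {c. hamiltonian c}"

end

theory Submission
  imports Defs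
begin

text \<open>
  A polynomial vector field is Hamiltonian iff its divergence \<open>P\<^sub>x + Q\<^sub>y\<close> vanishes
  identically; for a quadratic field the divergence is an affine function, and its value at a
  singular point \<open>p\<close> is \<open>tr Dv(p)\<close>. Suppose it vanishes at the singular points but not
  identically. Then its zero set is a line containing at least three distinct singular points.
  On that line \<open>P\<close> and \<open>Q\<close> are quadratic polynomials in the line parameter with three
  roots, so they vanish on the whole line; hence the direction of the line lies in the kernel
  of \<open>Dv\<close> at a singular point, contradicting non-degeneracy. The Hamiltonian fields are cut
  out by the three linear conditions expressing that the divergence vanishes, so they form a
  subspace of dimension \<open>12 - 3 = 9\<close>.
\<close>

lemma pdx_qP: "pdx (qP c) x y = c$1 + 2*c$3*x + c$4*y"
  unfolding pdx_def qP_def by (rule DERIV_imp_deriv) (auto intro!: derivative_eq_intros)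

lemma pdy_qP: "pdy (qP c) x y = c$2 + c$4*x + 2*c$5*y"
  unfolding pdy_def qP_def by (rule DERIV_imp_deriv) (auto intro!: derivative_eq_intros)

lemma pdx_qQ: "pdx (qQ c) x y = c$7 + 2*c$9*x + c$10*y"
  unfolding pdx_def qQ_def by (rule DERIV_imp_deriv) (auto intro!: derivative_eq_intros)

lemma pdy_qQ: "pdy (qQ c) x y = c$8 + c$10*x + 2*c$11*y"
  unfolding pdy_def qQ_def by (rule DERIV_imp_deriv) (auto intro!: derivative_eq_intros)

subsection \<open>Hamiltonian fields are the divergence-free ones\<close>

definition divergence :: "qvf \<Rightarrow> complex \<Rightarrow> complex \<Rightarrow> complex" where
  "divergence c x y = pdx (qP c) x y + pdy (qQ c) x y"

lemma divergence_eq: "divergence c x y = c$1 + c$8 + (2*c$3 + c$10)*x + (c$4 + 2*c$11)*y"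
  unfolding divergence_def pdx_qP pdy_qQ by (simp add: algebra_simps)

lemma tr_Dv_eq_divergence: "tr_Dv c p = divergence c (fst p) (snd p)"
  unfolding tr_Dv_def divergence_def ..

lemma affine_fun_eq_0_iff:
  "(\<forall>x y. a + b*x + d*y = (0::'a::comm_ring_1)) \<longleftrightarrow> a = 0 \<and> b = 0 \<and> d = 0"
proof
  assume "\<forall>x y. a + b*x + d*y = 0"
  from this[rule_format, of 0 0] this[rule_format, of 1 0] this[rule_format, of 0 1]
  show "a = 0 \<and> b = 0 \<and> d = 0" by simp
qed simp

lemma divergence_zero_iff:
  "(\<forall>x y. divergence c x y = 0) \<longleftrightarrow> c$8 = - c$1 \<and> c$10 = - 2*c$3 \<and> c$11 = - c$4/2"
  unfolding divergence_eq affine_fun_eq_0_iff by (auto simp: add_eq_0_iff field_simps)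

lemma has_field_derivative_double_sum_x:
  "((\<lambda>t. \<Sum>i\<le>n. \<Sum>j\<le>n. b i j * t^i * g j) has_field_derivative
     (\<Sum>i\<le>n. \<Sum>j\<le>n. b i j * (of_nat i * x^(i-1)) * g j)) (at (x::complex))"
  by (auto intro!: derivative_eq_intros DERIV_sum)

lemma has_field_derivative_double_sum_y:
  "((\<lambda>t. \<Sum>i\<le>n. \<Sum>j\<le>n. b i j * f i * t^j) has_field_derivative
     (\<Sum>i\<le>n. \<Sum>j\<le>n. b i j * f i * (of_nat j * y^(j-1)))) (at (y::complex))"
  by (auto intro!: derivative_eq_intros DERIV_sum)

lemma poly2_hamiltonian_divergence:
  assumes "poly2 H"
  shows "pdx (pdy H) x y + pdy (\<lambda>x y. - pdx H x y) x y = 0"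
proof -
  obtain n a where H: "H = (\<lambda>x y. \<Sum>i\<le>n. \<Sum>j\<le>n. a i j * x^i * y^j)"
    using assms unfolding poly2_def by blast
  define M where "M = (\<Sum>i\<le>n. \<Sum>j\<le>n. a i j * (of_nat i * x^(i-1)) * (of_nat j * y^(j-1)))"
  have Hy: "pdy H = (\<lambda>x y. \<Sum>i\<le>n. \<Sum>j\<le>n. a i j * x^i * (of_nat j * y^(j-1)))"
    unfolding H pdy_def by (intro ext DERIV_imp_deriv has_field_derivative_double_sum_y)
  have Hx: "pdx H = (\<lambda>x y. \<Sum>i\<le>n. \<Sum>j\<le>n. a i j * (of_nat i * x^(i-1)) * y^j)"
    unfolding H pdx_def by (intro ext DERIV_imp_deriv has_field_derivative_double_sum_x)
  have "pdx (pdy H) x y = M"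
    unfolding Hy pdx_def M_def by (rule DERIV_imp_deriv[OF has_field_derivative_double_sum_x])
  moreover have "pdy (\<lambda>x y. - pdx H x y) x y = - M"
    unfolding Hx pdy_def M_def
    by (rule DERIV_imp_deriv[OF DERIV_minus[OF has_field_derivative_double_sum_y]])
  ultimately show ?thesis by simp
qed

lemma hamiltonian_imp_divergence_zero:
  assumes "hamiltonian c"
  shows "divergence c x y = 0"
proof -
  obtain H where "poly2 H" and "qP c = pdy H" and "qQ c = (\<lambda>x y. - pdx H x y)"
    using assms unfolding hamiltonian_def by fast
  then show ?thesis
    unfolding divergence_def using poly2_hamiltonian_divergence by simp
qed

lemma divergence_zero_imp_hamiltonian:
  assumes "\<forall>x y. divergence c x y = 0"
  shows "hamiltonian c"
proof -
  have c: "c$8 = - c$1" "c$10 = - 2*c$3" "c$11 = - c$4/2"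
    using assms divergence_zero_iff by blast+
  define H where "H = (\<lambda>x y::complex. c$0*y + c$1*x*y + c$2/2*y^2 + c$3*x^2*y + c$4/2*x*y^2
     + c$5/3*y^3 - c$6*x - c$7/2*x^2 - c$9/3*x^3)"
  define a where "a = (\<lambda>(i::nat) (j::nat). if i=0 \<and> j=1 then c$0 else if i=1 \<and> j=1 then c$1
     else if i=0 \<and> j=2 then c$2/2 else if i=2 \<and> j=1 then c$3 else if i=1 \<and> j=2 then c$4/2
     else if i=0 \<and> j=3 then c$5/3 else if i=1 \<and> j=0 then -c$6 else if i=2 \<and> j=0 then -c$7/2
     else if i=3 \<and> j=0 then -c$9/3 else 0)"
  have "H x y = (\<Sum>i\<le>3. \<Sum>j\<le>3. a i j * x^i * y^j)" for x y
    unfolding H_def a_def by (simp add: eval_nat_numeral algebra_simps)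
  then have "poly2 H"
    unfolding poly2_def by blast
  moreover have "pdy H x y = qP c x y" for x y
    unfolding pdy_def H_def qP_def
    by (rule DERIV_imp_deriv) (auto intro!: derivative_eq_intros simp: algebra_simps)
  moreover have "pdx H x y = c$1*y + 2*c$3*x*y + c$4/2*y^2 - c$6 - c$7*x - c$9*x^2" for x y
    unfolding pdx_def H_def
    by (rule DERIV_imp_deriv) (auto intro!: derivative_eq_intros simp: algebra_simps)
  then have "qQ c x y = - pdx H x y" for x y
    unfolding qQ_def c by (simp add: algebra_simps)
  ultimately show ?thesis
    unfolding hamiltonian_def by metis
qed

lemma hamiltonian_iff_divergence_zero: "hamiltonian c \<longleftrightarrow> (\<forall>x y. divergence c x y = 0)"
  using hamiltonian_imp_divergence_zero divergence_zero_imp_hamiltonian by blast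

subsection \<open>The dimension of \<open>H2\<close>\<close>

lemma UNIV_9: "(UNIV :: 9 set) = {0, 1, 2, 3, 4, 5, 6, 7, 8}"
proof -
  have "card {0, 1, 2, 3, 4, 5, 6, 7, 8 :: 9} = 9"
    by simp
  then show ?thesis
    by (intro sym[OF card_subset_eq]) simp_all
qed

lemma UNIV_12: "(UNIV :: 12 set) = {0, 1, 2, 3, 4, 5, 6, 7, 8, 9, 10, 11}"
proof -
  have "card {0, 1, 2, 3, 4, 5, 6, 7, 8, 9, 10, 11 :: 12} = 12"
    by simp
  then show ?thesis
    by (intro sym[OF card_subset_eq]) simp_all
qed

definition hamiltonian_param :: "complex^9 \<Rightarrow> qvf" where
  "hamiltonian_param z = (\<chi> i. if i=0 then z$0 else if i=1 then z$1 else if i=2 then z$2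
    else if i=3 then z$3 else if i=4 then z$4 else if i=5 then z$5 else if i=6 then z$6
    else if i=7 then z$7 else if i=8 then - z$1 else if i=9 then z$8 else if i=10 then -2*z$3
    else - z$4/2)"

lemma linear_hamiltonian_param: "Vector_Spaces.linear (*s) (*s) hamiltonian_param"
  unfolding Vector_Spaces.linear_iff
  by (auto simp: hamiltonian_param_def vec_eq_iff field_simps vec.vector_space_axioms)

lemma inj_hamiltonian_param: "inj hamiltonian_param"
proof (rule injI)
  fix z z' assume eq: "hamiltonian_param z = hamiltonian_param z'"
  have "\<forall>i\<in>{0, 1, 2, 3, 4, 5, 6, 7, 9 :: 12}. hamiltonian_param z $ i = hamiltonian_param z' $ i"
    using eq by simp
  then have "\<forall>k\<in>UNIV. z $ k = z' $ k"
    unfolding UNIV_9 by (simp add: hamiltonian_param_def)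
  then show "z = z'"
    by (simp add: vec_eq_iff)
qed

lemma range_hamiltonian_param: "range hamiltonian_param = H2"
proof
  show "range hamiltonian_param \<subseteq> H2"
    unfolding H2_def hamiltonian_iff_divergence_zero divergence_zero_iff
    by (auto simp: hamiltonian_param_def)
next
  show "H2 \<subseteq> range hamiltonian_param"
  proof
    fix c assume "c \<in> H2"
    then have c: "c$8 = - c$1" "c$10 = - 2*c$3" "c$11 = - c$4/2"
      unfolding H2_def hamiltonian_iff_divergence_zero divergence_zero_iff by auto
    define z :: "complex^9" where "z = (\<chi> k. if k=0 then c$0 else if k=1 then c$1
      else if k=2 then c$2 else if k=3 then c$3 else if k=4 then c$4 else if k=5 then c$5
      else if k=6 then c$6 else if k=7 then c$7 else c$9)"
    have "\<forall>i\<in>UNIV. c $ i = hamiltonian_param z $ i"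
      unfolding UNIV_12 using c by (simp add: hamiltonian_param_def z_def)
    then have "c = hamiltonian_param z"
      by (simp add: vec_eq_iff)
    then show "c \<in> range hamiltonian_param"
      by blast
  qed
qed

lemma dim_H2: "vec.dim H2 = 9"
proof -
  have "vec.dim H2 = vec.dim (range hamiltonian_param)"
    by (simp add: range_hamiltonian_param)
  also have "\<dots> = vec.dim (UNIV :: (complex^9) set)"
    using inj_hamiltonian_param
    by (intro vec.dim_image_eq[OF linear_hamiltonian_param]) (auto simp: inj_on_def inj_def)
  also have "\<dots> = 9"
    by (simp add: card_cart_basis)
  finally show ?thesis .
qed

subsection \<open>Three collinear singular points force a degenerate one\<close>

lemma quadratic_three_roots_linear_coeff:
  fixes A B C u :: "'a::idom"
  assumes roots: "\<And>t. t \<in> {0, 1, u} \<Longrightarrow> A + B*t + C*t^2 = 0" and "u \<noteq> 0" "u \<noteq> 1"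
  shows "B = 0"
proof -
  have "A = 0" and BC: "B + C = 0" and "u * (B + u*C) = 0"
    using roots[of 0] roots[of 1] roots[of u] by (auto simp: algebra_simps power2_eq_square)
  then have "B + u*C = 0"
    using \<open>u \<noteq> 0\<close> by simp
  moreover have "(u - 1) * C = (B + u*C) - (B + C)"
    by (simp add: algebra_simps)
  ultimately have "(u - 1) * C = 0"
    using BC by simp
  then have "C = 0"
    using \<open>u \<noteq> 1\<close> by simp
  then show ?thesis
    using BC by simp
qed

lemma qP_on_line: "qP c (x + t*w1) (y + t*w2) = qP c x y
    + (pdx (qP c) x y * w1 + pdy (qP c) x y * w2) * t + (c$3*w1^2 + c$4*w1*w2 + c$5*w2^2) * t^2"
  unfolding qP_def pdx_qP pdy_qP by (simp add: algebra_simps power2_eq_square)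

lemma qQ_on_line: "qQ c (x + t*w1) (y + t*w2) = qQ c x y
    + (pdx (qQ c) x y * w1 + pdy (qQ c) x y * w2) * t + (c$9*w1^2 + c$10*w1*w2 + c$11*w2^2) * t^2"
  unfolding qQ_def pdx_qQ pdy_qQ by (simp add: algebra_simps power2_eq_square)

lemma det2_eq_0_of_kernel:
  fixes a b d e w1 w2 :: "'a::idom"
  assumes "a*w1 + b*w2 = 0" "d*w1 + e*w2 = 0" "w1 \<noteq> 0 \<or> w2 \<noteq> 0"
  shows "a*e - b*d = 0"
proof -
  have "w1 * (a*e - b*d) = e*(a*w1 + b*w2) - b*(d*w1 + e*w2)"
    and "w2 * (a*e - b*d) = a*(d*w1 + e*w2) - d*(a*w1 + b*w2)"
    by (simp_all add: algebra_simps)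
  then show ?thesis
    using assms by auto
qed

lemma three_points_on_line_param:
  fixes x1 y1 x2 y2 x3 y3 :: "'a::field"
  assumes on_line: "al + be*x1 + ga*y1 = 0" "al + be*x2 + ga*y2 = 0" "al + be*x3 + ga*y3 = 0"
    and "be \<noteq> 0 \<or> ga \<noteq> 0" and "(x1, y1) \<noteq> (x2, y2)"
  obtains u where "x3 = x1 + u*(x2 - x1)" "y3 = y1 + u*(y2 - y1)"
proof -
  define w1 w2 z1 z2 where "w1 = x2 - x1" "w2 = y2 - y1" "z1 = x3 - x1" "z2 = y3 - y1"
  have "w1*be + w2*ga = (al + be*x2 + ga*y2) - (al + be*x1 + ga*y1)"
    and "z1*be + z2*ga = (al + be*x3 + ga*y3) - (al + be*x1 + ga*y1)"
    unfolding w1_w2_z1_z2_def by (simp_all add: algebra_simps)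
  then have "w1*be + w2*ga = 0" "z1*be + z2*ga = 0"
    using on_line by simp_all
  then have cross: "w1*z2 - w2*z1 = 0"
    using \<open>be \<noteq> 0 \<or> ga \<noteq> 0\<close> by (rule det2_eq_0_of_kernel)
  have "w1 \<noteq> 0 \<or> w2 \<noteq> 0"
    using \<open>(x1, y1) \<noteq> (x2, y2)\<close> unfolding w1_w2_z1_z2_def by auto
  then obtain u where "z1 = u*w1" "z2 = u*w2"
  proof
    assume "w1 \<noteq> 0"
    with cross show thesis
      using that[of "z1/w1"] by (simp add: field_simps)
  next
    assume "w2 \<noteq> 0"
    with cross show thesis
      using that[of "z2/w2"] by (simp add: field_simps)
  qed
  then show thesis
    using that[of u] unfolding w1_w2_z1_z2_def by (simp add: algebra_simps)
qed

lemma det_Dv_eq_0_of_singular_points_on_line: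
  assumes sing: "\<forall>t\<in>{0, 1, u}. (x + t*w1, y + t*w2) \<in> singular_points c"
    and "u \<noteq> 0" "u \<noteq> 1" "w1 \<noteq> 0 \<or> w2 \<noteq> 0"
  shows "det_Dv c (x, y) = 0"
proof -
  have "qP c (x + t*w1) (y + t*w2) = 0" "qQ c (x + t*w1) (y + t*w2) = 0" if "t \<in> {0, 1, u}" for t
    using sing that by (auto simp: singular_points_def)
  then have P: "qP c x y + (pdx (qP c) x y * w1 + pdy (qP c) x y * w2) * t
               + (c$3*w1^2 + c$4*w1*w2 + c$5*w2^2) * t^2 = 0"
    and Q: "qQ c x y + (pdx (qQ c) x y * w1 + pdy (qQ c) x y * w2) * t
               + (c$9*w1^2 + c$10*w1*w2 + c$11*w2^2) * t^2 = 0" if "t \<in> {0, 1, u}" for t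
    using that by (simp_all only: flip: qP_on_line qQ_on_line)
  have "pdx (qP c) x y * w1 + pdy (qP c) x y * w2 = 0"
    by (rule quadratic_three_roots_linear_coeff[OF P \<open>u \<noteq> 0\<close> \<open>u \<noteq> 1\<close>])
  moreover have "pdx (qQ c) x y * w1 + pdy (qQ c) x y * w2 = 0"
    by (rule quadratic_three_roots_linear_coeff[OF Q \<open>u \<noteq> 0\<close> \<open>u \<noteq> 1\<close>])
  ultimately show ?thesis
    unfolding det_Dv_def fst_conv snd_conv
    using \<open>w1 \<noteq> 0 \<or> w2 \<noteq> 0\<close> by (rule det2_eq_0_of_kernel)
qed

lemma hamiltonian_iff_tr_Dv_eq_0:
  assumes "3 \<le> card (singular_points c)"
    and nondeg: "\<forall>p \<in> singular_points c. nondegenerate c p"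
  shows "hamiltonian c \<longleftrightarrow> (\<forall>p \<in> singular_points c. tr_Dv c p = 0)"
proof
  assume "hamiltonian c"
  then show "\<forall>p \<in> singular_points c. tr_Dv c p = 0"
    by (simp add: tr_Dv_eq_divergence hamiltonian_imp_divergence_zero)
next
  assume tr: "\<forall>p \<in> singular_points c. tr_Dv c p = 0"
  obtain T where "T \<subseteq> singular_points c" "card T = 3"
    by (meson obtain_subset_with_card_n[OF assms(1)])
  then obtain p1 p2 p3 where "{p1, p2, p3} \<subseteq> singular_points c" "p1 \<noteq> p2" "p1 \<noteq> p3" "p2 \<noteq> p3"
    unfolding card_3_iff by blast
  moreover obtain x1 y1 x2 y2 x3 y3 where "p1 = (x1, y1)" "p2 = (x2, y2)" "p3 = (x3, y3)"
    by (metis surj_pair)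
  ultimately have
    S: "(x1, y1) \<in> singular_points c" "(x2, y2) \<in> singular_points c" "(x3, y3) \<in> singular_points c"
    and d: "(x1, y1) \<noteq> (x2, y2)" "(x1, y1) \<noteq> (x3, y3)" "(x2, y2) \<noteq> (x3, y3)"
    by simp_all
  define al be ga where "al = c$1 + c$8" "be = 2*c$3 + c$10" "ga = c$4 + 2*c$11"
  have div: "divergence c x y = al + be*x + ga*y" for x y
    unfolding divergence_eq al_be_ga_def ..
  have on_line: "al + be*x1 + ga*y1 = 0" "al + be*x2 + ga*y2 = 0" "al + be*x3 + ga*y3 = 0"
    using tr S by (auto simp: tr_Dv_eq_divergence div)
  show "hamiltonian c"
  proof (cases "be = 0 \<and> ga = 0")
    case True
    with on_line have "al = 0"
      by simp
    with True show ?thesis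
      by (simp add: hamiltonian_iff_divergence_zero div)
  next
    case False
    then obtain u where u: "x3 = x1 + u*(x2 - x1)" "y3 = y1 + u*(y2 - y1)"
      using three_points_on_line_param[OF on_line _ d(1)] by blast
    have "\<forall>t\<in>{0, 1, u}. (x1 + t*(x2 - x1), y1 + t*(y2 - y1)) \<in> singular_points c"
      using S u by simp
    moreover have "u \<noteq> 0" "u \<noteq> 1" "x2 - x1 \<noteq> 0 \<or> y2 - y1 \<noteq> 0"
      using u d by auto
    ultimately have "det_Dv c (x1, y1) = 0"
      by (rule det_Dv_eq_0_of_singular_points_on_line)
    with nondeg S(1) show ?thesis
      unfolding nondegenerate_def by blast
  qed
qed

theorem mainTheorem5:
  shows "(\<forall>c :: qvf. card (singular_points c) = 4 \<and>
              (\<forall>p \<in> singular_points c. nondegenerate c p) \<longrightarrow>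
            (hamiltonian c \<longleftrightarrow> (\<forall>p \<in> singular_points c. tr_Dv c p = 0)))
         \<and> vec.dim H2 = 9"
  using hamiltonian_iff_tr_Dv_eq_0 dim_H2 by simp

end
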